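(* Let $G$ be a simple $(3,4)$-biregular $X,Y$-bigraph (vertices of $X$ of degree 3, of $Y$ of degree 4), so $|X|=4k$ and $|Y|=3k$ for some $k$, and suppose $G$ has a full 3-regular subgraph $H$. Let $X'=X\cap V(H)$ and $X_0=X\setminus X'=\{x^0_1,\dots,x^0_k\}$; the neighborhoods $T_i=N_G(x^0_i)$, $1\le i\le k$, partition $Y$ into triples, and let $\mathbf{T}=(T_1,\dots,T_k)$. Fix a proper 3-edge-coloring $c$ of $H$ with colors $1,2,3$, let $H'$ be the spanning subgraph of $H$ consisting of the edges of colors 1 and 2, and let $F$ be the graph with vertex set $Y$ having, for each $x\in X'$ with $H'$-neighbors $y,y'$, an edge $yy'$ (so $F$ is 2-regular, possibly with multiple edges, and its components are cycles). If $\mathbf{T}$ has a mixed transversal (with respect to $F$), then $G$ has a proper path-factor.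
   Context: A simple graph has no loops or multiple edges. An $X,Y$-bigraph is a bipartite graph with partite sets $X,Y$; a $(3,4)$-biregular bigraph has all vertices of one part of degree 3 and all of the other part of degree 4. A full 3-regular subgraph is a 3-regular subgraph containing every vertex of degree 4. A proper path-factor of $G$ is a spanning subgraph each of whose components is a path with both endpoints in $X$ and length in $\{2,4,6,8\}$. For the family $\mathbf{T}$ of disjoint triples on $V(F)$: a transversal is a set $S$ containing exactly one element of each triple; an independent transversal is a transversal that is an independent set in $F$; a spread transversal is a transversal $S$ such that, for some choice of direction on each cycle of $F$, for every vertex $v$ of $F$ not in $S$ there is a vertex of $S$ among the next three vertices after $v$ in the forward direction along its cycle. Let $F^*$ be the 4-regular graph obtained from $F$ by adding, for each triple of $\mathbf{T}$, a triangle on its three vertices. A mixed transversal is a transversal $S$ such that for each component $C$ of $F^*$, the set $S\cap V(C)$ is an independent transversal or a spread transversal of the triples contained in $V(C)$ with respect to the cycles of $F$ contained in $C$. *)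

theory Defs
  imports Main
begin

definition nbrs :: "('a \<Rightarrow> 'a \<Rightarrow> bool) \<Rightarrow> 'a \<Rightarrow> 'a set" where
  "nbrs E v = {u. E v u}"

definition simple_graph :: "'a set \<Rightarrow> ('a \<Rightarrow> 'a \<Rightarrow> bool) \<Rightarrow> bool" where
  "simple_graph V E \<longleftrightarrow> finite V \<and> (\<forall>u v. E u v \<longrightarrow> u \<in> V \<and> v \<in> V)
     \<and> (\<forall>u v. E u v \<longrightarrow> E v u) \<and> (\<forall>u. \<not> E u u)"

definition bigraph34 :: "'a set \<Rightarrow> 'a set \<Rightarrow> ('a \<Rightarrow> 'a \<Rightarrow> bool) \<Rightarrow> bool" where
  "bigraph34 X Y E \<longleftrightarrow> finite X \<and> finite Y \<and> X \<inter> Y = {} \<and> simple_graph (X \<union> Y) E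
     \<and> (\<forall>u v. E u v \<longrightarrow> (u \<in> X \<and> v \<in> Y) \<or> (u \<in> Y \<and> v \<in> X))
     \<and> (\<forall>x\<in>X. card (nbrs E x) = 3) \<and> (\<forall>y\<in>Y. card (nbrs E y) = 4)"

definition full_3reg_subgraph ::
  "'a set \<Rightarrow> 'a set \<Rightarrow> ('a \<Rightarrow> 'a \<Rightarrow> bool) \<Rightarrow> 'a set \<Rightarrow> ('a \<Rightarrow> 'a \<Rightarrow> bool) \<Rightarrow> bool" where
  "full_3reg_subgraph X Y E VH EH \<longleftrightarrow> VH \<subseteq> X \<union> Y
     \<and> (\<forall>u v. EH u v \<longrightarrow> E u v) \<and> (\<forall>u v. EH u v \<longrightarrow> EH v u)
     \<and> (\<forall>u v. EH u v \<longrightarrow> u \<in> VH \<and> v \<in> VH)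
     \<and> (\<forall>v\<in>VH. card (nbrs EH v) = 3)
     \<and> (\<forall>v\<in>X \<union> Y. card (nbrs E v) = 4 \<longrightarrow> v \<in> VH)"

definition proper_3_edge_colouring :: "('a \<Rightarrow> 'a \<Rightarrow> bool) \<Rightarrow> ('a \<Rightarrow> 'a \<Rightarrow> nat) \<Rightarrow> bool" where
  "proper_3_edge_colouring EH c \<longleftrightarrow>
     (\<forall>u v. EH u v \<longrightarrow> c u v \<in> {1,2,3} \<and> c u v = c v u)
     \<and> (\<forall>v u w. EH v u \<and> EH v w \<and> u \<noteq> w \<longrightarrow> c v u \<noteq> c v w)"

definition mg_adj :: "'e set \<Rightarrow> ('e \<Rightarrow> 'v set) \<Rightarrow> 'v \<Rightarrow> 'v \<Rightarrow> bool" where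
  "mg_adj I ends u v \<longleftrightarrow> (\<exists>e\<in>I. ends e = {u, v} \<and> u \<noteq> v)"

definition Fstar_adj :: "'v set set \<Rightarrow> 'e set \<Rightarrow> ('e \<Rightarrow> 'v set) \<Rightarrow> 'v \<Rightarrow> 'v \<Rightarrow> bool" where
  "Fstar_adj \<T> I ends u v \<longleftrightarrow> mg_adj I ends u v \<or> (\<exists>T\<in>\<T>. u \<in> T \<and> v \<in> T \<and> u \<noteq> v)"

definition Fstar_component :: "'v set set \<Rightarrow> 'e set \<Rightarrow> ('e \<Rightarrow> 'v set) \<Rightarrow> 'v \<Rightarrow> 'v set" where
  "Fstar_component \<T> I ends v = {u. (Fstar_adj \<T> I ends)\<^sup>*\<^sup>* v u}"

definition transversal :: "'v set set \<Rightarrow> 'v set \<Rightarrow> bool" where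
  "transversal \<T> S \<longleftrightarrow> S \<subseteq> \<Union>\<T> \<and> (\<forall>T\<in>\<T>. card (S \<inter> T) = 1)"

definition independent_in :: "'e set \<Rightarrow> ('e \<Rightarrow> 'v set) \<Rightarrow> 'v set \<Rightarrow> bool" where
  "independent_in I ends A \<longleftrightarrow> (\<forall>u\<in>A. \<forall>v\<in>A. \<not> mg_adj I ends u v)"

text \<open>A choice of direction on every cycle of the 2-regular multigraph F on V, encoded by the
  successor map \<sigma>: each vertex v leaves along its own edge e v towards \<sigma> v, every edge being
  used exactly once.\<close>
definition cycle_direction :: "'v set \<Rightarrow> 'e set \<Rightarrow> ('e \<Rightarrow> 'v set) \<Rightarrow> ('v \<Rightarrow> 'v) \<Rightarrow> bool" where
  "cycle_direction V I ends \<sigma> \<longleftrightarrow> bij_betw \<sigma> V V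
     \<and> (\<exists>e. bij_betw e V I \<and> (\<forall>v\<in>V. ends (e v) = {v, \<sigma> v}))"

definition spread_on :: "('v \<Rightarrow> 'v) \<Rightarrow> 'v set \<Rightarrow> 'v set \<Rightarrow> bool" where
  "spread_on \<sigma> C S \<longleftrightarrow> (\<forall>v\<in>C - S. \<exists>i\<in>{1,2,3::nat}. (\<sigma> ^^ i) v \<in> S)"

definition mixed_transversal :: "'v set \<Rightarrow> 'v set set \<Rightarrow> 'e set \<Rightarrow> ('e \<Rightarrow> 'v set) \<Rightarrow> 'v set \<Rightarrow> bool" where
  "mixed_transversal V \<T> I ends S \<longleftrightarrow> transversal \<T> S \<and>
     (\<forall>v\<in>V. let C = Fstar_component \<T> I ends v in
        independent_in I ends (S \<inter> C)
        \<or> (\<exists>\<sigma>. cycle_direction V I ends \<sigma> \<and> spread_on \<sigma> C S))"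

definition proper_path_factor :: "'a set \<Rightarrow> 'a set \<Rightarrow> ('a \<Rightarrow> 'a \<Rightarrow> bool) \<Rightarrow> ('a \<Rightarrow> 'a \<Rightarrow> bool) \<Rightarrow> bool" where
  "proper_path_factor X Y E P \<longleftrightarrow>
     (\<forall>u v. P u v \<longrightarrow> E u v) \<and> (\<forall>u v. P u v \<longrightarrow> P v u) \<and>
     (\<forall>v\<in>X \<union> Y. \<exists>vs. distinct vs \<and> set vs = {u. P\<^sup>*\<^sup>* v u}
        \<and> length vs - 1 \<in> {2,4,6,8} \<and> hd vs \<in> X \<and> last vs \<in> X
        \<and> (\<forall>i. Suc i < length vs \<longrightarrow> P (vs ! i) (vs ! Suc i))
        \<and> (\<forall>u\<in>set vs. \<forall>w. P u w \<longrightarrow> (\<exists>i. Suc i < length vs \<and>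
              ((u = vs ! i \<and> w = vs ! Suc i) \<or> (w = vs ! i \<and> u = vs ! Suc i)))))"

end

theory Submission
  imports Defs
begin

(* Orient the cycles of F: on a component of F* whose transversal is spread, by a direction
   witnessing this, and elsewhere by entering X' along colour 1 and leaving along colour 2.
   Walking along a directed cycle alternates between Y and X', and each x in X0 starts one path.
   If the component of its triple is spread, the path goes from x to the vertex s of S in the
   triple and then along the cycle up to the vertex of X' just before the next vertex of S,
   which is at most four steps after s; this gives length 2, 4, 6 or 8. Otherwise S is
   independent there, and the path runs through x between the two other vertices of the
   triple, each extended by its outgoing edge of F, and by one more step of the cycle when
   that edge leads to a vertex of S; independence puts the predecessor of every vertex of S
   outside S, so each vertex of S is picked up by exactly one such arm. These paths partition
   Y, and X' through the bijection between Y and the edges of F. *)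

definition list_adj :: "'a list \<Rightarrow> 'a \<Rightarrow> 'a \<Rightarrow> bool" where
  "list_adj L u w \<longleftrightarrow>
     (\<exists>i. Suc i < length L \<and> (u = L ! i \<and> w = L ! Suc i \<or> w = L ! i \<and> u = L ! Suc i))"

lemma symp_list_adj: "symp (list_adj L)"
  unfolding list_adj_def by (rule sympI) blast

lemma list_adj_in_set: "list_adj L u w \<Longrightarrow> u \<in> set L \<and> w \<in> set L"
  unfolding list_adj_def by auto

lemma rtranclp_list_adj:
  assumes "u \<in> set L" "w \<in> set L"
  shows "(list_adj L)\<^sup>*\<^sup>* u w"
proof -
  have from_hd: "(list_adj L)\<^sup>*\<^sup>* (L ! 0) (L ! i)" if "i < length L" for i
    using that
  proof (induction i)
    case (Suc i)
    then have "list_adj L (L ! i) (L ! Suc i)" unfolding list_adj_def by blast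
    with Suc show ?case by (meson Suc_lessD rtranclp.rtrancl_into_rtrancl)
  qed simp
  obtain i j where "i < length L" "u = L ! i" "j < length L" "w = L ! j"
    using assms by (metis in_set_conv_nth)
  with from_hd sympD[OF symp_rtranclp[OF symp_list_adj]] show ?thesis
    by (meson rtranclp_trans)
qed

lemma successively_nth: "successively R L \<Longrightarrow> Suc i < length L \<Longrightarrow> R (L ! i) (L ! Suc i)"
proof (induction R L arbitrary: i rule: successively.induct)
  case (3 R x y xs)
  then show ?case by (cases i) auto
qed auto

definition proper_path :: "'a set \<Rightarrow> ('a \<Rightarrow> 'a \<Rightarrow> bool) \<Rightarrow> 'a list \<Rightarrow> bool" where
  "proper_path X E L \<longleftrightarrow> distinct L \<and> successively E L \<and> length L - 1 \<in> {2,4,6,8}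
     \<and> hd L \<in> X \<and> last L \<in> X"

definition union_adj :: "'k set \<Rightarrow> ('k \<Rightarrow> 'a list) \<Rightarrow> 'a \<Rightarrow> 'a \<Rightarrow> bool" where
  "union_adj K L u w \<longleftrightarrow> (\<exists>k\<in>K. list_adj (L k) u w)"

lemma symp_union_adj: "symp (union_adj K L)"
proof (rule sympI)
  fix u w assume "union_adj K L u w"
  then obtain k where "k \<in> K" "list_adj (L k) u w" unfolding union_adj_def by blast
  then show "union_adj K L w u" using sympD[OF symp_list_adj] unfolding union_adj_def by metis
qed

lemma union_adj_in_list:
  assumes disjoint: "\<And>k k'. k \<in> K \<Longrightarrow> k' \<in> K \<Longrightarrow> k \<noteq> k' \<Longrightarrow> set (L k) \<inter> set (L k') = {}"
    and "union_adj K L u w" "k \<in> K" "u \<in> set (L k)"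
  shows "list_adj (L k) u w"
proof -
  obtain k' where "k' \<in> K" "list_adj (L k') u w" using assms(2) unfolding union_adj_def by blast
  moreover from this have "k' = k"
    using disjoint[of k' k] assms(3,4) list_adj_in_set[of "L k'" u w] by blast
  ultimately show ?thesis by simp
qed

lemma union_adj_component:
  assumes disjoint: "\<And>k k'. k \<in> K \<Longrightarrow> k' \<in> K \<Longrightarrow> k \<noteq> k' \<Longrightarrow> set (L k) \<inter> set (L k') = {}"
    and k: "k \<in> K" "v \<in> set (L k)"
  shows "{u. (union_adj K L)\<^sup>*\<^sup>* v u} = set (L k)"
proof
  show "{u. (union_adj K L)\<^sup>*\<^sup>* v u} \<subseteq> set (L k)"
  proof
    fix u assume "u \<in> {u. (union_adj K L)\<^sup>*\<^sup>* v u}"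
    then have "(union_adj K L)\<^sup>*\<^sup>* v u" by simp
    then show "u \<in> set (L k)"
    proof (induction rule: rtranclp_induct)
      case (step y z)
      from list_adj_in_set[OF union_adj_in_list[of K L, OF disjoint step.hyps(2) k(1) step.IH]]
      show ?case by (rule conjunct2)
    qed (use k in simp)
  qed
  show "set (L k) \<subseteq> {u. (union_adj K L)\<^sup>*\<^sup>* v u}"
  proof
    fix u assume "u \<in> set (L k)"
    then have "(list_adj (L k))\<^sup>*\<^sup>* v u" by (rule rtranclp_list_adj[OF k(2)])
    moreover have "list_adj (L k) \<le> union_adj K L" using k(1) by (auto simp: union_adj_def)
    ultimately show "u \<in> {u. (union_adj K L)\<^sup>*\<^sup>* v u}" using rtranclp_mono by blast
  qed
qed

lemma proper_path_factor_of_paths: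
  fixes L :: "'k \<Rightarrow> 'a list"
  assumes sym: "\<And>u v. E u v \<Longrightarrow> E v u"
    and paths: "\<And>k. k \<in> K \<Longrightarrow> proper_path X E (L k)"
    and disjoint: "\<And>k k'. k \<in> K \<Longrightarrow> k' \<in> K \<Longrightarrow> k \<noteq> k' \<Longrightarrow> set (L k) \<inter> set (L k') = {}"
    and cover: "\<And>v. v \<in> X \<union> Y \<Longrightarrow> \<exists>k\<in>K. v \<in> set (L k)"
  shows "proper_path_factor X Y E (union_adj K L)"
  unfolding proper_path_factor_def
proof (intro conjI allI impI ballI)
  fix u w assume "union_adj K L u w"
  then obtain k i where k: "k \<in> K" "Suc i < length (L k)"
    and uw: "u = L k ! i \<and> w = L k ! Suc i \<or> w = L k ! i \<and> u = L k ! Suc i"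
    unfolding union_adj_def list_adj_def by blast
  have "E (L k ! i) (L k ! Suc i)" using successively_nth k paths unfolding proper_path_def by blast
  with uw show "E u w" using sym by blast
next
  fix u w assume "union_adj K L u w"
  then show "union_adj K L w u" by (rule sympD[OF symp_union_adj])
next
  fix v assume "v \<in> X \<union> Y"
  then obtain k where k: "k \<in> K" "v \<in> set (L k)" using cover by blast
  show "\<exists>vs. distinct vs \<and> set vs = {u. (union_adj K L)\<^sup>*\<^sup>* v u}
      \<and> length vs - 1 \<in> {2,4,6,8} \<and> hd vs \<in> X \<and> last vs \<in> X
      \<and> (\<forall>i. Suc i < length vs \<longrightarrow> union_adj K L (vs ! i) (vs ! Suc i))
      \<and> (\<forall>u\<in>set vs. \<forall>w. union_adj K L u w \<longrightarrow> (\<exists>i. Suc i < length vs \<and>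
            ((u = vs ! i \<and> w = vs ! Suc i) \<or> (w = vs ! i \<and> u = vs ! Suc i))))"
  proof (intro exI[of _ "L k"] conjI allI impI ballI)
    fix i assume "Suc i < length (L k)"
    then show "union_adj K L (L k ! i) (L k ! Suc i)"
      using k(1) unfolding union_adj_def list_adj_def by blast
  next
    fix u w assume "u \<in> set (L k)" "union_adj K L u w"
    then show "\<exists>i. Suc i < length (L k) \<and>
        (u = L k ! i \<and> w = L k ! Suc i \<or> w = L k ! i \<and> u = L k ! Suc i)"
      using union_adj_in_list[of K L, OF disjoint _ k(1)] unfolding list_adj_def by blast
  qed (use k union_adj_component[of K L, OF disjoint k] paths in \<open>auto simp: proper_path_def\<close>)
qed

lemma funpow_diff_apply: "i \<le> j \<Longrightarrow> (f ^^ j) x = (f ^^ i) ((f ^^ (j - i)) x)"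
  by (metis funpow_add le_add_diff_inverse o_apply)

lemma bij_betw_funpow_periodic:
  assumes "bij_betw f A A" "finite A" "x \<in> A"
  obtains n where "0 < n" "(f ^^ n) x = x"
proof -
  have A_closed: "(f ^^ j) x \<in> A" for j
    using bij_betwE[OF bij_betw_funpow[OF assms(1)]] assms(3) by blast
  have "\<not> inj_on (\<lambda>j. (f ^^ j) x) {..card A}"
  proof
    assume "inj_on (\<lambda>j. (f ^^ j) x) {..card A}"
    then have "card {..card A} \<le> card A"
      using card_inj_on_le[OF _ _ assms(2)] A_closed by blast
    then show False by simp
  qed
  then obtain i j where "i < j" "(f ^^ i) x = (f ^^ j) x"
    unfolding inj_on_def by (metis linorder_neqE_nat)
  then have "(f ^^ i) x = (f ^^ i) ((f ^^ (j - i)) x)"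
    using funpow_diff_apply[of i j f x] by simp
  then have "x = (f ^^ (j - i)) x"
    using bij_betw_imp_inj_on[OF bij_betw_funpow[OF assms(1)]] assms(3) A_closed
    by (auto dest: inj_onD)
  with \<open>i < j\<close> show thesis by (intro that[of "j - i"]) auto
qed

lemma bij_betw_glue:
  assumes bij: "\<And>C. bij_betw (f C) A B"
    and cls: "\<And>C y. y \<in> A \<Longrightarrow> cls' (f C y) = cls y"
  shows "bij_betw (\<lambda>y. f (cls y) y) A B"
  unfolding bij_betw_def
proof
  show "inj_on (\<lambda>y. f (cls y) y) A"
  proof (rule inj_onI)
    fix y z assume yz: "y \<in> A" "z \<in> A" "f (cls y) y = f (cls z) z"
    then have "cls y = cls z" using cls[of y "cls y"] cls[of z "cls z"] by simp
    with yz show "y = z" using bij_betw_imp_inj_on[OF bij] by (auto dest: inj_onD)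
  qed
  show "(\<lambda>y. f (cls y) y) ` A = B"
  proof
    show "(\<lambda>y. f (cls y) y) ` A \<subseteq> B" using bij_betwE[OF bij] by auto
    show "B \<subseteq> (\<lambda>y. f (cls y) y) ` A"
    proof
      fix b assume "b \<in> B"
      then obtain y where y: "y \<in> A" "f (cls' b) y = b"
        using bij[of "cls' b"] by (metis bij_betw_def imageE)
      then have "cls y = cls' b" using cls[of y "cls' b"] by simp
      with y show "b \<in> (\<lambda>y. f (cls y) y) ` A" by (intro image_eqI[of _ _ y]) auto
    qed
  qed
qed

lemma funpow_glue:
  assumes closed: "\<And>C y. y \<in> A \<Longrightarrow> f C y \<in> A \<and> cls (f C y) = cls y" and "y \<in> A"
  shows "((\<lambda>y. f (cls y) y) ^^ i) y = (f (cls y) ^^ i) y"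
proof -
  have "((\<lambda>y. f (cls y) y) ^^ i) y = (f (cls y) ^^ i) y
    \<and> (f (cls y) ^^ i) y \<in> A \<and> cls ((f (cls y) ^^ i) y) = cls y"
    by (induction i) (use assms in auto)
  then show ?thesis by blast
qed

fun zigzag :: "('a \<Rightarrow> 'a) \<Rightarrow> ('a \<Rightarrow> 'a) \<Rightarrow> nat \<Rightarrow> 'a \<Rightarrow> 'a list" where
  "zigzag \<sigma> e 0 y = []"
| "zigzag \<sigma> e (Suc n) y = y # e y # zigzag \<sigma> e n (\<sigma> y)"

definition orbit_prefix :: "('a \<Rightarrow> 'a) \<Rightarrow> nat \<Rightarrow> 'a \<Rightarrow> 'a set" where
  "orbit_prefix \<sigma> n y = (\<lambda>j. (\<sigma> ^^ j) y) ` {..<n}"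

lemma orbit_prefix_0 [simp]: "orbit_prefix \<sigma> 0 y = {}"
  by (simp add: orbit_prefix_def)

lemma orbit_prefix_Suc: "orbit_prefix \<sigma> (Suc n) y = insert y (orbit_prefix \<sigma> n (\<sigma> y))"
  unfolding orbit_prefix_def lessThan_Suc_eq_insert_0
  by (auto simp: image_image funpow_Suc_right simp del: funpow.simps)

lemma set_zigzag: "set (zigzag \<sigma> e n y) = orbit_prefix \<sigma> n y \<union> e ` orbit_prefix \<sigma> n y"
  by (induction n arbitrary: y) (auto simp: orbit_prefix_Suc)

lemma length_zigzag [simp]: "length (zigzag \<sigma> e n y) = 2 * n"
  by (induction n arbitrary: y) auto

lemma hd_zigzag: "0 < n \<Longrightarrow> hd (zigzag \<sigma> e n y) = y"
  by (cases n) auto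

lemma last_zigzag: "0 < n \<Longrightarrow> last (zigzag \<sigma> e n y) = e ((\<sigma> ^^ (n - 1)) y)"
proof (induction n arbitrary: y)
  case (Suc n)
  then show ?case by (cases n) (auto simp: funpow_Suc_right simp del: funpow.simps)
qed simp

lemma successively_zigzag:
  assumes "y \<in> A" "\<sigma> ` A \<subseteq> A" "\<And>z. z \<in> A \<Longrightarrow> E z (e z) \<and> E (e z) (\<sigma> z)"
  shows "successively E (zigzag \<sigma> e n y)"
  using assms(1)
proof (induction n arbitrary: y)
  case (Suc n)
  then show ?case using assms(2,3) by (cases n) (auto simp: successively_Cons)
qed simp

lemma distinct_zigzag:
  assumes "y \<in> A" "\<sigma> ` A \<subseteq> A" "inj_on e A" "e ` A \<inter> A = {}"
    and "inj_on (\<lambda>j. (\<sigma> ^^ j) y) {..<n}"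
  shows "distinct (zigzag \<sigma> e n y)"
  using assms(1,5)
proof (induction n arbitrary: y)
  case (Suc n)
  have orbit_in_A: "orbit_prefix \<sigma> m z \<subseteq> A" if "z \<in> A" for m z
    using that assms(2) by (induction m arbitrary: z) (auto simp: orbit_prefix_Suc)
  have "inj_on (\<lambda>j. (\<sigma> ^^ j) y) (Suc ` {..<n})"
    using Suc.prems(2) by (rule inj_on_subset) auto
  then have inj: "inj_on (\<lambda>j. (\<sigma> ^^ j) (\<sigma> y)) {..<n}"
    by (simp add: inj_on_def funpow_Suc_right del: funpow.simps)
  have "y \<notin> orbit_prefix \<sigma> n (\<sigma> y)"
  proof
    assume "y \<in> orbit_prefix \<sigma> n (\<sigma> y)"
    then obtain j where "j < n" "(\<sigma> ^^ 0) y = (\<sigma> ^^ Suc j) y"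
      by (auto simp: orbit_prefix_def funpow_Suc_right simp del: funpow.simps)
    with inj_onD[OF Suc.prems(2)] show False by fastforce
  qed
  moreover have "\<sigma> y \<in> A" using Suc.prems(1) assms(2) by blast
  moreover note orbit_in_A[OF this, of n]
  moreover have "e z \<notin> A" if "z \<in> A" for z using that assms(4) by blast
  moreover from this have "e y \<noteq> y" using Suc.prems(1) by metis
  ultimately show ?case
    using Suc.IH[of "\<sigma> y"] inj Suc.prems(1) assms(3)
    by (auto simp: set_zigzag dest: inj_onD)
qed simp

text \<open>The construction in abstract form: \<sigma> is a direction of the cycles of F on Y, e y is the
  vertex of X' on the edge of F from y to \<sigma> y, the triples are the neighbourhoods of the
  vertices of X0, and spread marks the components of F* on which S is spread (on all others S
  is independent).\<close>
locale zigzag_path_cover =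
  fixes X0 X' Y S :: "'a set" and E :: "'a \<Rightarrow> 'a \<Rightarrow> bool" and \<sigma> e :: "'a \<Rightarrow> 'a"
    and spread :: "'a \<Rightarrow> bool"
  assumes finite_Y: "finite Y"
    and disjoint: "X0 \<inter> Y = {}" "X' \<inter> Y = {}" "X0 \<inter> X' = {}"
    and E_sym: "\<And>u v. E u v \<Longrightarrow> E v u"
    and bij_succ: "bij_betw \<sigma> Y Y"
    and bij_edge: "bij_betw e Y X'"
    and edge_E: "\<And>y. y \<in> Y \<Longrightarrow> E y (e y) \<and> E (e y) (\<sigma> y)"
    and succ_neq: "\<And>y. y \<in> Y \<Longrightarrow> \<sigma> y \<noteq> y"
    and triple_subset: "\<And>x. x \<in> X0 \<Longrightarrow> nbrs E x \<subseteq> Y"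
    and card_triple: "\<And>x. x \<in> X0 \<Longrightarrow> card (nbrs E x) = 3"
    and unique_triple: "\<And>y. y \<in> Y \<Longrightarrow> \<exists>!x. x \<in> X0 \<and> E x y"
    and card_S_triple: "\<And>x. x \<in> X0 \<Longrightarrow> card (S \<inter> nbrs E x) = 1"
    and spread_succ: "\<And>y. y \<in> Y \<Longrightarrow> spread (\<sigma> y) = spread y"
    and spread_triple: "\<And>x u w. x \<in> X0 \<Longrightarrow> E x u \<Longrightarrow> E x w \<Longrightarrow> spread u = spread w"
    and spread_hits_S: "\<And>y. y \<in> Y \<Longrightarrow> spread y \<Longrightarrow> y \<notin> S \<Longrightarrow> \<exists>i\<in>{1,2,3::nat}. (\<sigma> ^^ i) y \<in> S"
    and independent_S: "\<And>y. y \<in> Y \<Longrightarrow> \<not> spread y \<Longrightarrow> y \<in> S \<Longrightarrow> \<sigma> y \<notin> S"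
begin

lemma succ_in_Y: "y \<in> Y \<Longrightarrow> \<sigma> y \<in> Y"
  using bij_succ bij_betwE by blast

lemma funpow_succ_in_Y: "y \<in> Y \<Longrightarrow> (\<sigma> ^^ j) y \<in> Y"
  by (induction j) (auto simp: succ_in_Y)

lemma orbit_prefix_subset_Y: "y \<in> Y \<Longrightarrow> orbit_prefix \<sigma> n y \<subseteq> Y"
  unfolding orbit_prefix_def using funpow_succ_in_Y by auto

lemma spread_funpow: "y \<in> Y \<Longrightarrow> spread ((\<sigma> ^^ j) y) = spread y"
  by (induction j) (auto simp: spread_succ funpow_succ_in_Y)

lemma spread_orbit_prefix: "y \<in> Y \<Longrightarrow> z \<in> orbit_prefix \<sigma> n y \<Longrightarrow> spread z = spread y"
  unfolding orbit_prefix_def using spread_funpow by auto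

lemma funpow_succ_cancel: "y \<in> Y \<Longrightarrow> z \<in> Y \<Longrightarrow> (\<sigma> ^^ j) y = (\<sigma> ^^ j) z \<Longrightarrow> y = z"
  using bij_betw_imp_inj_on[OF bij_betw_funpow[OF bij_succ]] by (auto dest: inj_onD)

lemma edge_in_X': "y \<in> Y \<Longrightarrow> e y \<in> X'"
  using bij_edge bij_betwE by blast

lemma edge_image_disjoint: "e ` Y \<inter> Y = {}"
  using edge_in_X' disjoint(2) by blast

lemma disjoint_zigzag_vertices:
  assumes "A \<subseteq> Y" "B \<subseteq> Y" "A \<inter> B = {}"
  shows "(A \<union> e ` A) \<inter> (B \<union> e ` B) = {}"
proof -
  have "e ` A \<inter> e ` B = {}"
    using inj_on_image_Int[OF bij_betw_imp_inj_on[OF bij_edge] assms(1,2)] assms(3) by simp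
  with assms edge_image_disjoint show ?thesis by blast
qed

definition chosen :: "'a \<Rightarrow> 'a" where
  "chosen x = (THE s. S \<inter> nbrs E x = {s})"

lemma S_inter_triple: "x \<in> X0 \<Longrightarrow> S \<inter> nbrs E x = {chosen x}"
proof -
  assume "x \<in> X0"
  then obtain s where s: "S \<inter> nbrs E x = {s}" using card_S_triple card_1_singletonE by blast
  then have "chosen x = s" unfolding chosen_def by (intro the_equality) auto
  with s show ?thesis by simp
qed

lemma chosen: "x \<in> X0 \<Longrightarrow> chosen x \<in> S \<and> E x (chosen x) \<and> chosen x \<in> Y"
  using S_inter_triple[of x] triple_subset[of x] unfolding nbrs_def by blast

lemma chosen_eq:
  assumes "x \<in> X0" "s \<in> S" "E x s"
  shows "chosen x = s"
proof -
  have "s \<in> S \<inter> nbrs E x" using assms(2,3) by (simp add: nbrs_def)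
  with S_inter_triple[OF assms(1)] show ?thesis by simp
qed

lemma triple_eq: "y \<in> Y \<Longrightarrow> x1 \<in> X0 \<Longrightarrow> x2 \<in> X0 \<Longrightarrow> E x1 y \<Longrightarrow> E x2 y \<Longrightarrow> x1 = x2"
  using unique_triple by blast

definition others :: "'a \<Rightarrow> 'a \<times> 'a" where
  "others x = (SOME p. fst p \<noteq> snd p \<and> nbrs E x - S = {fst p, snd p})"

lemma others:
  assumes "x \<in> X0"
  shows "fst (others x) \<noteq> snd (others x) \<and> nbrs E x - S = {fst (others x), snd (others x)}"
proof -
  have "finite (nbrs E x)" using card_triple[OF assms] card.infinite by fastforce
  moreover have "nbrs E x - S = nbrs E x - {chosen x}" using S_inter_triple[OF assms] by blast
  moreover have "chosen x \<in> nbrs E x" using S_inter_triple[OF assms] by blast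
  ultimately have "card (nbrs E x - S) = 2" using card_triple[OF assms] by simp
  then obtain a b where "a \<noteq> b" "nbrs E x - S = {a, b}" by (auto simp: card_2_iff)
  then have "fst (a, b) \<noteq> snd (a, b) \<and> nbrs E x - S = {fst (a, b), snd (a, b)}" by simp
  then show ?thesis unfolding others_def by (rule someI)
qed

definition gap :: "'a \<Rightarrow> nat" where
  "gap s = (LEAST m. 0 < m \<and> (\<sigma> ^^ m) s \<in> S)"

lemma before_gap: "0 < m \<Longrightarrow> m < gap s \<Longrightarrow> (\<sigma> ^^ m) s \<notin> S"
  unfolding gap_def using not_less_Least by blast

lemma gap:
  assumes "s \<in> S" "s \<in> Y" "spread s"
  shows "0 < gap s \<and> gap s \<le> 4 \<and> (\<sigma> ^^ gap s) s \<in> S"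
proof -
  have "\<exists>m. 0 < m \<and> m \<le> 4 \<and> (\<sigma> ^^ m) s \<in> S"
  proof (cases "\<sigma> s \<in> S")
    case True then show ?thesis by (intro exI[of _ 1]) simp
  next
    case False
    have "\<sigma> s \<in> Y" "spread (\<sigma> s)" using assms(2,3) succ_in_Y spread_succ by auto
    then obtain i where "i \<in> {1,2,3::nat}" "(\<sigma> ^^ i) (\<sigma> s) \<in> S"
      using spread_hits_S False by blast
    then show ?thesis
      by (intro exI[of _ "Suc i"]) (auto simp: funpow_Suc_right simp del: funpow.simps)
  qed
  then obtain m where m: "0 < m" "m \<le> 4" "(\<sigma> ^^ m) s \<in> S" by blast
  have "0 < gap s \<and> (\<sigma> ^^ gap s) s \<in> S"
    unfolding gap_def by (rule LeastI[of _ m]) (use m in blast)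
  moreover have "gap s \<le> m"
    unfolding gap_def by (rule Least_le) (use m in blast)
  ultimately show ?thesis using m by simp
qed

text \<open>Distinct vertices of S start disjoint gap-segments of their orbits.\<close>
lemma gap_unique:
  assumes "s \<in> S" "s \<in> Y" "t \<in> Y" "(\<sigma> ^^ i) s = (\<sigma> ^^ j) t" "i \<le> j" "j < gap t"
  shows "i = j \<and> s = t"
proof -
  have "(\<sigma> ^^ i) s = (\<sigma> ^^ i) ((\<sigma> ^^ (j - i)) t)"
    using assms(4) funpow_diff_apply[OF assms(5)] by simp
  then have s: "s = (\<sigma> ^^ (j - i)) t"
    using funpow_succ_cancel assms(2,3) funpow_succ_in_Y by blast
  have "j - i = 0"
    using before_gap[of "j - i" t] assms(1,6) s by (cases "j - i = 0") auto
  with s assms(5) show ?thesis by simp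
qed

lemma inj_on_before_gap: "t \<in> S \<Longrightarrow> t \<in> Y \<Longrightarrow> inj_on (\<lambda>j. (\<sigma> ^^ j) t) {..<gap t}"
  unfolding inj_on_def by (metis gap_unique lessThan_iff linorder_le_cases)

text \<open>An arm of length 2 also picks up the vertex of S following its start.\<close>
definition arm_length :: "'a \<Rightarrow> nat" where
  "arm_length z = (if \<sigma> z \<in> S then 2 else 1)"

lemma arm_length_cases: "arm_length z = 1 \<or> arm_length z = 2"
  unfolding arm_length_def by simp

lemma orbit_prefix_arm_length:
  "orbit_prefix \<sigma> (arm_length z) z = (if \<sigma> z \<in> S then {z, \<sigma> z} else {z})"
  by (simp add: arm_length_def numeral_2_eq_2 orbit_prefix_Suc)

definition path :: "'a \<Rightarrow> 'a list" where
  "path x = (if spread (chosen x) then x # zigzag \<sigma> e (gap (chosen x)) (chosen x)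
     else rev (zigzag \<sigma> e (arm_length (fst (others x))) (fst (others x)))
          @ x # zigzag \<sigma> e (arm_length (snd (others x))) (snd (others x)))"

definition path_Y :: "'a \<Rightarrow> 'a set" where
  "path_Y x = (if spread (chosen x) then orbit_prefix \<sigma> (gap (chosen x)) (chosen x)
     else orbit_prefix \<sigma> (arm_length (fst (others x))) (fst (others x))
          \<union> orbit_prefix \<sigma> (arm_length (snd (others x))) (snd (others x)))"

lemma set_path: "set (path x) = insert x (path_Y x \<union> e ` path_Y x)"
  unfolding path_def path_Y_def by (auto simp: set_zigzag)

lemma others_in_Y: "x \<in> X0 \<Longrightarrow> fst (others x) \<in> Y \<and> snd (others x) \<in> Y"
  using others triple_subset by blast

lemma others_pair:
  assumes "x \<in> X0" "others x = (a, b)"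
  shows "a \<noteq> b" "E x a" "E x b" "a \<notin> S" "b \<notin> S" "a \<in> Y" "b \<in> Y"
  using others[OF assms(1)] others_in_Y[OF assms(1)] unfolding assms(2) nbrs_def by auto

lemma path_Y_subset: "x \<in> X0 \<Longrightarrow> path_Y x \<subseteq> Y"
  unfolding path_Y_def using orbit_prefix_subset_Y chosen others_in_Y by auto

lemma set_zigzag_subset: "y \<in> Y \<Longrightarrow> set (zigzag \<sigma> e n y) \<subseteq> Y \<union> X'"
  unfolding set_zigzag using orbit_prefix_subset_Y edge_in_X' by blast

lemma zigzag_properties:
  assumes "y \<in> Y" "inj_on (\<lambda>j. (\<sigma> ^^ j) y) {..<n}" "0 < n"
  shows "distinct (zigzag \<sigma> e n y)" "successively E (zigzag \<sigma> e n y)"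
    "hd (zigzag \<sigma> e n y) = y" "last (zigzag \<sigma> e n y) \<in> X'"
proof -
  have closed: "\<sigma> ` Y \<subseteq> Y" using succ_in_Y by blast
  show "distinct (zigzag \<sigma> e n y)"
    using distinct_zigzag[OF assms(1) closed bij_betw_imp_inj_on[OF bij_edge]
        edge_image_disjoint assms(2)] .
  show "successively E (zigzag \<sigma> e n y)" using successively_zigzag[OF assms(1) closed edge_E] .
  show "hd (zigzag \<sigma> e n y) = y" using hd_zigzag[OF assms(3)] .
  show "last (zigzag \<sigma> e n y) \<in> X'"
    unfolding last_zigzag[OF assms(3)] using edge_in_X' funpow_succ_in_Y assms(1) by blast
qed

lemma inj_on_arm: "z \<in> Y \<Longrightarrow> inj_on (\<lambda>j. (\<sigma> ^^ j) z) {..<arm_length z}"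
proof (rule inj_onI)
  fix i j assume "z \<in> Y" "i \<in> {..<arm_length z}" "j \<in> {..<arm_length z}" "(\<sigma> ^^ i) z = (\<sigma> ^^ j) z"
  then show "i = j"
    using succ_neq[of z] arm_length_cases[of z] by (auto simp: less_2_cases_iff)
qed

lemma proper_path_spread:
  assumes x: "x \<in> X0" and spread: "spread (chosen x)"
  shows "proper_path (X0 \<union> X') E (path x)"
proof -
  define s where "s = chosen x"
  have s: "s \<in> S" "s \<in> Y" "E x s" "spread s" using chosen[OF x] spread unfolding s_def by auto
  then have gap_s: "0 < gap s" "gap s \<le> 4" using gap by auto
  note zz = zigzag_properties[OF s(2) inj_on_before_gap[OF s(1,2)] gap_s(1)]
  have path: "path x = x # zigzag \<sigma> e (gap s) s" unfolding path_def s_def using spread by simp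
  have "x \<notin> set (zigzag \<sigma> e (gap s) s)"
    using set_zigzag_subset[OF s(2)] x disjoint(1,3) by blast
  moreover have "zigzag \<sigma> e (gap s) s \<noteq> []" using gap_s by (cases "gap s") auto
  moreover have "gap s \<in> {1,2,3,4}" using gap_s by auto
  ultimately show ?thesis
    unfolding proper_path_def path using zz s(3) x by (auto simp: successively_Cons)
qed

lemma proper_path_independent:
  assumes x: "x \<in> X0" and spread: "\<not> spread (chosen x)"
  shows "proper_path (X0 \<union> X') E (path x)"
proof -
  obtain a b where ab: "others x = (a, b)" by fastforce
  note a_b = others_pair[OF x ab]
  define A B where "A = zigzag \<sigma> e (arm_length a) a" and "B = zigzag \<sigma> e (arm_length b) b"
  have path: "path x = rev A @ x # B" unfolding path_def A_def B_def ab using spread by simp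
  have arm_pos: "0 < arm_length z" for z using arm_length_cases[of z] by auto
  note zA = zigzag_properties[OF a_b(6) inj_on_arm[OF a_b(6)] arm_pos]
  note zB = zigzag_properties[OF a_b(7) inj_on_arm[OF a_b(7)] arm_pos]
  have "orbit_prefix \<sigma> (arm_length a) a \<inter> orbit_prefix \<sigma> (arm_length b) b = {}"
    using a_b inj_onD[OF bij_betw_imp_inj_on[OF bij_succ], of a b]
    unfolding orbit_prefix_arm_length by auto
  then have "set A \<inter> set B = {}"
    unfolding A_def B_def set_zigzag
    by (intro disjoint_zigzag_vertices orbit_prefix_subset_Y a_b(6,7))
  moreover have "x \<notin> set A" "x \<notin> set B"
    unfolding A_def B_def using set_zigzag_subset a_b(6,7) x disjoint(1,3) by blast+
  moreover have "A \<noteq> []" "B \<noteq> []" using arm_pos unfolding A_def B_def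
    by (metis length_zigzag list.size(3) mult_is_0 neq0_conv zero_neq_numeral)+
  moreover have "length A + length B \<in> {4,6,8}"
    using arm_length_cases[of a] arm_length_cases[of b] unfolding A_def B_def by auto
  moreover have "successively (\<lambda>u v. E v u) A"
    using zA(2) E_sym unfolding A_def by (auto elim: successively_mono)
  ultimately show ?thesis
    unfolding proper_path_def path using zA zB a_b(2,3) E_sym[of x a] unfolding A_def[symmetric] B_def[symmetric]
    by (auto simp: successively_append_iff successively_Cons hd_rev last_rev)
qed

lemma proper_path: "x \<in> X0 \<Longrightarrow> proper_path (X0 \<union> X') E (path x)"
  using proper_path_spread proper_path_independent by blast

lemma spread_path_Y:
  assumes "x \<in> X0" "y \<in> path_Y x"
  shows "spread y = spread (chosen x)"
proof -
  obtain a b where ab: "others x = (a, b)" by fastforce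
  note a_b = others_pair[OF assms(1) ab]
  then have "spread a = spread (chosen x)" "spread b = spread (chosen x)"
    using spread_triple[OF assms(1)] chosen[OF assms(1)] by blast+
  with assms show ?thesis
    using spread_orbit_prefix a_b(6,7) chosen[OF assms(1)]
    unfolding path_Y_def ab by (auto split: if_splits)
qed

lemma path_Y_independent:
  assumes "x \<in> X0" "\<not> spread (chosen x)" "y \<in> path_Y x"
  shows "y \<notin> S \<and> E x y \<or> y \<in> S \<and> (\<exists>z\<in>Y. E x z \<and> \<sigma> z = y)"
proof -
  obtain a b where ab: "others x = (a, b)" by fastforce
  with assms(2,3) others_pair[OF assms(1) ab] show ?thesis
    unfolding path_Y_def ab orbit_prefix_arm_length by (auto split: if_splits)
qed

lemma path_Y_disjoint:
  assumes x: "x1 \<in> X0" "x2 \<in> X0" and y: "y \<in> path_Y x1" "y \<in> path_Y x2"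
  shows "x1 = x2"
proof -
  have "y \<in> Y" using path_Y_subset x y by blast
  show ?thesis
  proof (cases "spread y")
    case True
    define s1 s2 where "s1 = chosen x1" and "s2 = chosen x2"
    have s: "s1 \<in> S" "s1 \<in> Y" "E x1 s1" "s2 \<in> S" "s2 \<in> Y" "E x2 s2"
      using chosen x unfolding s1_def s2_def by auto
    have "spread s1" "spread s2" using spread_path_Y x y True unfolding s1_def s2_def by auto
    with y obtain i j where "i < gap s1" "j < gap s2" "(\<sigma> ^^ i) s1 = y" "(\<sigma> ^^ j) s2 = y"
      unfolding path_Y_def s1_def s2_def orbit_prefix_def by auto
    then have "s1 = s2"
      using gap_unique[of s1 s2 i j] gap_unique[of s2 s1 j i] s by (cases "i \<le> j") auto
    then show ?thesis using triple_eq[OF s(2) x s(3)] s(6) by simp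
  next
    case False
    then have "\<not> spread (chosen x1)" "\<not> spread (chosen x2)" using spread_path_Y x y by auto
    note mem = path_Y_independent[OF x(1) this(1) y(1)] path_Y_independent[OF x(2) this(2) y(2)]
    show ?thesis
    proof (cases "y \<in> S")
      case True
      with mem obtain z1 z2 where "z1 \<in> Y" "E x1 z1" "z2 \<in> Y" "E x2 z2" "\<sigma> z1 = \<sigma> z2" by auto
      then show ?thesis
        using inj_onD[OF bij_betw_imp_inj_on[OF bij_succ], of z1 z2] triple_eq[of z1 x1 x2] x
        by auto
    next
      case False
      with mem show ?thesis using triple_eq[OF \<open>y \<in> Y\<close> x] by auto
    qed
  qed
qed

lemma orbit_meets_S:
  assumes "y \<in> Y" "spread y"
  shows "\<exists>n s. s \<in> S \<and> s \<in> Y \<and> (\<sigma> ^^ n) s = y"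
proof (cases "y \<in> S")
  case True
  then show ?thesis using assms(1) by (intro exI[of _ 0]) auto
next
  case False
  then obtain k where k: "(\<sigma> ^^ k) y \<in> S" using spread_hits_S assms by blast
  obtain p where p: "0 < p" "(\<sigma> ^^ p) y = y"
    using bij_betw_funpow_periodic[OF bij_succ finite_Y assms(1)] by blast
  have "(p - 1) * k + k = p * k" using p(1) by (cases p) auto
  then have "(\<sigma> ^^ ((p - 1) * k)) ((\<sigma> ^^ k) y) = (\<sigma> ^^ (p * k)) y"
    by (metis funpow_add o_apply)
  also have "\<dots> = y" using funpow_mod_eq[where f = \<sigma> and n = p and m = "p * k", OF p(2)] by simp
  finally show ?thesis using k funpow_succ_in_Y assms(1) by blast
qed

lemma orbit_segment_of_S:
  assumes y: "y \<in> Y" "spread y"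
  shows "\<exists>s n. s \<in> S \<and> s \<in> Y \<and> n < gap s \<and> (\<sigma> ^^ n) s = y"
proof -
  define n where "n = (LEAST n. \<exists>s. s \<in> S \<and> s \<in> Y \<and> (\<sigma> ^^ n) s = y)"
  obtain s where s: "s \<in> S" "s \<in> Y" "(\<sigma> ^^ n) s = y"
    using LeastI_ex[OF orbit_meets_S[OF y]] unfolding n_def by blast
  have "spread s" using spread_funpow[OF s(2), of n] s(3) y(2) by simp
  then have gap_s: "0 < gap s" "(\<sigma> ^^ gap s) s \<in> S" using gap s(1,2) by auto
  have "n < gap s"
  proof (rule ccontr)
    assume "\<not> n < gap s"
    then have "n - gap s + gap s = n" "n - gap s < n" using gap_s(1) by auto
    have "(\<sigma> ^^ (n - gap s)) ((\<sigma> ^^ gap s) s) = (\<sigma> ^^ (n - gap s + gap s)) s"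
      by (simp only: funpow_add o_apply)
    also have "\<dots> = y" using \<open>n - gap s + gap s = n\<close> s(3) by simp
    finally have "\<exists>s'. s' \<in> S \<and> s' \<in> Y \<and> (\<sigma> ^^ (n - gap s)) s' = y"
      using gap_s(2) funpow_succ_in_Y[OF s(2)] by blast
    with not_less_Least[OF \<open>n - gap s < n\<close>[unfolded n_def]] show False by (auto simp: n_def)
  qed
  with s show ?thesis by blast
qed

lemma path_Y_cover_spread:
  assumes "y \<in> Y" "spread y"
  shows "\<exists>x\<in>X0. y \<in> path_Y x"
proof -
  obtain s n where s: "s \<in> S" "s \<in> Y" "n < gap s" "(\<sigma> ^^ n) s = y"
    using orbit_segment_of_S[OF assms] by blast
  obtain x where x: "x \<in> X0" "E x s" using unique_triple[OF s(2)] by blast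
  then have "chosen x = s" using chosen_eq s(1) by blast
  moreover have "spread s" using spread_funpow[OF s(2), of n] s(4) assms(2) by simp
  ultimately have "y \<in> path_Y x" using s(3,4) unfolding path_Y_def orbit_prefix_def by auto
  with x(1) show ?thesis by blast
qed

lemma path_Y_cover_independent:
  assumes y: "y \<in> Y" "\<not> spread y"
  shows "\<exists>x\<in>X0. y \<in> path_Y x"
proof -
  have other: "\<exists>x\<in>X0. \<not> spread (chosen x) \<and> z \<in> nbrs E x - S"
    if z: "z \<in> Y" "z \<notin> S" "\<not> spread z" for z
  proof -
    obtain x where x: "x \<in> X0" "E x z" using unique_triple[OF z(1)] by blast
    then have "spread (chosen x) = spread z" using spread_triple chosen by blast
    with x z show ?thesis by (auto simp: nbrs_def)
  qed
  have in_path_Y: "\<sigma> z \<in> S \<Longrightarrow> \<sigma> z \<in> path_Y x" "z \<in> path_Y x"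
    if "x \<in> X0" "\<not> spread (chosen x)" "z \<in> nbrs E x - S" for x z
    using that others[OF that(1)] unfolding path_Y_def orbit_prefix_arm_length by auto
  show ?thesis
  proof (cases "y \<in> S")
    case True
    obtain z where z: "z \<in> Y" "\<sigma> z = y" using bij_succ y(1) by (metis bij_betw_def imageE)
    have "\<not> spread z" using spread_succ[OF z(1)] z(2) y(2) by simp
    moreover from this have "z \<notin> S" using independent_S[OF z(1)] z(2) True by blast
    ultimately show ?thesis using other[OF z(1)] in_path_Y(1) z(2) True by blast
  next
    case False
    then show ?thesis using other[OF y(1)] in_path_Y(2) y(2) by blast
  qed
qed

lemma path_Y_cover: "y \<in> Y \<Longrightarrow> \<exists>x\<in>X0. y \<in> path_Y x"
  using path_Y_cover_spread path_Y_cover_independent by blast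

theorem proper_path_factor: "\<exists>P. proper_path_factor (X0 \<union> X') Y E P"
proof
  show "proper_path_factor (X0 \<union> X') Y E (union_adj X0 path)"
  proof (rule proper_path_factor_of_paths)
    fix x1 x2 assume "x1 \<in> X0" "x2 \<in> X0" "x1 \<noteq> x2"
    moreover from this have "path_Y x1 \<inter> path_Y x2 = {}" using path_Y_disjoint by blast
    ultimately show "set (path x1) \<inter> set (path x2) = {}"
      unfolding set_path
      using disjoint_zigzag_vertices[OF path_Y_subset path_Y_subset] path_Y_subset
        edge_in_X' disjoint(1,3) by blast
  next
    fix v assume v: "v \<in> X0 \<union> X' \<union> Y"
    show "\<exists>x\<in>X0. v \<in> set (path x)"
    proof (cases "v \<in> X0")
      case True
      then show ?thesis using set_path by blast
    next
      case False
      with v have "v \<in> Y \<union> e ` Y" using bij_edge by (auto simp: bij_betw_def)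
      then obtain y where "y \<in> Y" "v = y \<or> v = e y" by blast
      moreover obtain x where "x \<in> X0" "y \<in> path_Y x" using path_Y_cover[OF \<open>y \<in> Y\<close>] by blast
      ultimately show ?thesis using set_path by blast
    qed
  qed (fact E_sym, fact proper_path)
qed

end

locale mixed_transversal_setting =
  fixes X Y VH S :: "'a set" and E EH :: "'a \<Rightarrow> 'a \<Rightarrow> bool" and c :: "'a \<Rightarrow> 'a \<Rightarrow> nat"
  assumes bigraph: "bigraph34 X Y E"
    and full: "full_3reg_subgraph X Y E VH EH"
    and colouring: "proper_3_edge_colouring EH c"
    and mixed: "mixed_transversal Y (nbrs E ` (X - VH)) (X \<inter> VH)
           (\<lambda>x. {y. EH x y \<and> c x y \<in> {1,2}}) S"
begin

lemma finite_Y: "finite Y" and XY_disjoint: "X \<inter> Y = {}"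
  and E_sym: "E u v \<Longrightarrow> E v u"
  and E_between: "E u v \<Longrightarrow> u \<in> X \<and> v \<in> Y \<or> u \<in> Y \<and> v \<in> X"
  and degree_X: "x \<in> X \<Longrightarrow> card (nbrs E x) = 3"
  and degree_Y: "y \<in> Y \<Longrightarrow> card (nbrs E y) = 4"
  using bigraph unfolding bigraph34_def simple_graph_def by blast+

lemma EH_E: "EH u v \<Longrightarrow> E u v" and EH_sym: "EH u v \<Longrightarrow> EH v u"
  and EH_VH: "EH u v \<Longrightarrow> u \<in> VH \<and> v \<in> VH"
  and degree_H: "v \<in> VH \<Longrightarrow> card (nbrs EH v) = 3"
  and Y_subset_VH: "y \<in> Y \<Longrightarrow> y \<in> VH"
  using full degree_Y unfolding full_3reg_subgraph_def by blast+

lemma colour_range: "EH u v \<Longrightarrow> c u v \<in> {1,2,3}"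
  and colour_sym: "EH u v \<Longrightarrow> c u v = c v u"
  and colour_proper: "EH v u \<Longrightarrow> EH v w \<Longrightarrow> u \<noteq> w \<Longrightarrow> c v u \<noteq> c v w"
  using colouring unfolding proper_3_edge_colouring_def by blast+

lemma finite_nbrs: "v \<in> X \<union> Y \<Longrightarrow> finite (nbrs E v)"
  using degree_X degree_Y card.infinite by fastforce

lemma nbrs_H_eq:
  assumes "x \<in> X \<inter> VH"
  shows "nbrs EH x = nbrs E x"
proof (rule card_subset_eq)
  show "finite (nbrs E x)" using finite_nbrs assms by blast
  show "nbrs EH x \<subseteq> nbrs E x" using EH_E by (auto simp: nbrs_def)
  show "card (nbrs EH x) = card (nbrs E x)" using degree_X degree_H assms by simp
qed

definition colour_nbr :: "'a \<Rightarrow> nat \<Rightarrow> 'a" where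
  "colour_nbr v k = (THE u. EH v u \<and> c v u = k)"

lemma colour_nbr:
  assumes "v \<in> VH" "k \<in> {1,2,3}"
  shows "EH v (colour_nbr v k) \<and> c v (colour_nbr v k) = k"
proof -
  have "c v ` nbrs EH v \<subseteq> {1,2,3}" using colour_range unfolding nbrs_def by blast
  moreover have "inj_on (c v) (nbrs EH v)" using colour_proper by (auto simp: nbrs_def inj_on_def)
  then have "card (c v ` nbrs EH v) = 3" using card_image degree_H[OF assms(1)] by metis
  ultimately have "c v ` nbrs EH v = {1,2,3}" by (simp add: card_subset_eq)
  with assms(2) have "k \<in> c v ` nbrs EH v" by simp
  then obtain u where u: "EH v u" "c v u = k" by (auto simp: nbrs_def)
  then have "\<exists>!u. EH v u \<and> c v u = k" using colour_proper by blast
  then show ?thesis unfolding colour_nbr_def by (rule theI')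
qed

lemma colour_nbr_eq: "EH v u \<Longrightarrow> colour_nbr v (c v u) = u"
  using colour_nbr[of v "c v u"] EH_VH colour_range colour_proper by metis

lemma colour_nbr_back: "v \<in> VH \<Longrightarrow> k \<in> {1,2,3} \<Longrightarrow> colour_nbr (colour_nbr v k) k = v"
  using colour_nbr colour_nbr_eq EH_sym colour_sym by metis

lemma colour_nbr_sides:
  assumes "k \<in> {1,2,3}"
  shows "y \<in> Y \<Longrightarrow> colour_nbr y k \<in> X \<inter> VH" and "x \<in> X \<inter> VH \<Longrightarrow> colour_nbr x k \<in> Y"
  using colour_nbr[OF _ assms] EH_VH EH_E E_between XY_disjoint Y_subset_VH by blast+

definition F_ends :: "'a \<Rightarrow> 'a set" where
  "F_ends x = {y. EH x y \<and> c x y \<in> {1,2}}"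

lemma F_ends:
  assumes "x \<in> X \<inter> VH"
  shows "F_ends x = {colour_nbr x 1, colour_nbr x 2} \<and> colour_nbr x 1 \<noteq> colour_nbr x 2"
proof -
  have "x \<in> VH" using assms by blast
  note nbr = colour_nbr[OF this]
  have "F_ends x \<subseteq> {colour_nbr x 1, colour_nbr x 2}"
    unfolding F_ends_def using colour_nbr_eq by force
  moreover have "{colour_nbr x 1, colour_nbr x 2} \<subseteq> F_ends x"
    unfolding F_ends_def using nbr[of 1] nbr[of 2] by simp
  moreover have "colour_nbr x 1 \<noteq> colour_nbr x 2" using nbr[of 1] nbr[of 2] by force
  ultimately show ?thesis by blast
qed

lemma unique_outside_H:
  assumes y: "y \<in> Y"
  shows "\<exists>!x. x \<in> X - VH \<and> E x y"
proof -
  have sub: "nbrs EH y \<subseteq> nbrs E y" using EH_E by (auto simp: nbrs_def)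
  have "finite (nbrs E y)" using finite_nbrs y by blast
  then have "card (nbrs E y - nbrs EH y) = card (nbrs E y) - card (nbrs EH y)"
    using card_Diff_subset[OF finite_subset[OF sub] sub] by blast
  then have "card (nbrs E y - nbrs EH y) = 1"
    using degree_Y[OF y] degree_H[OF Y_subset_VH[OF y]] by simp
  then obtain x where x: "nbrs E y - nbrs EH y = {x}" by (rule card_1_singletonE)
  have "x \<in> X" using x E_between y XY_disjoint by (auto simp: nbrs_def)
  moreover have "x \<notin> VH"
  proof
    assume "x \<in> VH"
    then have "E x y \<longrightarrow> EH x y" using nbrs_H_eq[of x] \<open>x \<in> X\<close> by (auto simp: nbrs_def)
    then have "EH y x" using x E_sym[of y x] EH_sym[of x y] by (auto simp: nbrs_def)
    then show False using x by (auto simp: nbrs_def)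
  qed
  moreover have "z = x" if "z \<in> X - VH" "E z y" for z
  proof -
    have "E y z" "\<not> EH y z" using E_sym[OF that(2)] EH_VH that(1) by auto
    then show ?thesis using x by (auto simp: nbrs_def)
  qed
  moreover have "E x y" using x E_sym by (auto simp: nbrs_def)
  ultimately show ?thesis by blast
qed

definition triples :: "'a set set" where
  "triples = nbrs E ` (X - VH)"

definition Fstar :: "'a \<Rightarrow> 'a \<Rightarrow> bool" where
  "Fstar = Fstar_adj triples (X \<inter> VH) F_ends"

definition component :: "'a \<Rightarrow> 'a set" where
  "component = Fstar_component triples (X \<inter> VH) F_ends"

lemma Fstar_sym: "Fstar u v \<Longrightarrow> Fstar v u"
  unfolding Fstar_def Fstar_adj_def mg_adj_def by (auto simp: insert_commute)

lemma component_iff: "w \<in> component u \<longleftrightarrow> Fstar\<^sup>*\<^sup>* u w"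
  unfolding component_def Fstar_component_def Fstar_def by simp

lemma component_eq: "Fstar\<^sup>*\<^sup>* u v \<Longrightarrow> component u = component v"
  unfolding set_eq_iff component_iff
  by (metis rtranclp_trans sympD[OF symp_rtranclp] sympI Fstar_sym)

definition direction :: "('a \<Rightarrow> 'a) \<Rightarrow> ('a \<Rightarrow> 'a) \<Rightarrow> bool" where
  "direction d ed \<longleftrightarrow> bij_betw d Y Y \<and> bij_betw ed Y (X \<inter> VH) \<and> (\<forall>v\<in>Y. F_ends (ed v) = {v, d v})"

lemma cycle_direction_iff: "cycle_direction Y (X \<inter> VH) F_ends d \<longleftrightarrow> (\<exists>ed. direction d ed)"
  unfolding cycle_direction_def direction_def by blast

lemma direction_step:
  assumes "direction d ed" "v \<in> Y"
  shows "d v \<in> Y \<and> ed v \<in> X \<inter> VH \<and> F_ends (ed v) = {v, d v} \<and> d v \<noteq> v \<and> Fstar v (d v)"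
proof -
  have step: "d v \<in> Y" "ed v \<in> X \<inter> VH" "F_ends (ed v) = {v, d v}"
    using assms unfolding direction_def by (auto dest: bij_betwE)
  moreover have "d v \<noteq> v" using F_ends[OF step(2)] step(3) by (metis doubleton_eq_iff)
  moreover from this have "Fstar v (d v)"
    unfolding Fstar_def Fstar_adj_def mg_adj_def using step(2,3) by metis
  ultimately show ?thesis by blast
qed

text \<open>Entering X' along colour 1 and leaving along colour 2 orients every cycle of F.\<close>
lemma default_direction: "direction (\<lambda>y. colour_nbr (colour_nbr y 1) 2) (\<lambda>y. colour_nbr y 1)"
proof -
  have Y_back: "colour_nbr y 1 \<in> X \<inter> VH \<and> colour_nbr (colour_nbr y 1) 1 = y" if "y \<in> Y" for y
    using colour_nbr_sides(1)[of 1 y] colour_nbr_back[OF Y_subset_VH, of y 1] that by simp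
  have X_back: "colour_nbr x k \<in> Y \<and> colour_nbr (colour_nbr x k) k = x"
    if "k \<in> {1,2,3}" "x \<in> X \<inter> VH" for x k
    using colour_nbr_sides(2)[OF that(1)] colour_nbr_back[OF _ that(1)] that(2) by blast
  have "bij_betw (\<lambda>y. colour_nbr y 1) Y (X \<inter> VH)"
    by (rule bij_betw_byWitness[where f'="\<lambda>x. colour_nbr x 1"]) (use Y_back X_back[of 1] in auto)
  moreover have "bij_betw (\<lambda>y. colour_nbr (colour_nbr y 1) 2) Y Y"
  proof (rule bij_betw_byWitness[where f'="\<lambda>y. colour_nbr (colour_nbr y 2) 1"])
    show "\<forall>y\<in>Y. colour_nbr (colour_nbr (colour_nbr (colour_nbr y 1) 2) 2) 1 = y"
      using Y_back X_back[of 2] by auto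
    show "\<forall>y\<in>Y. colour_nbr (colour_nbr (colour_nbr (colour_nbr y 2) 1) 1) 2 = y"
    proof
      fix y assume y: "y \<in> Y"
      then have x: "colour_nbr y 2 \<in> X \<inter> VH" using colour_nbr_sides(1)[of 2] by simp
      then have "colour_nbr (colour_nbr (colour_nbr y 2) 1) 1 = colour_nbr y 2"
        using X_back[of 1] by simp
      then show "colour_nbr (colour_nbr (colour_nbr (colour_nbr y 2) 1) 1) 2 = y"
        using colour_nbr_back[OF Y_subset_VH[OF y], of 2] by simp
    qed
    show "(\<lambda>y. colour_nbr (colour_nbr y 1) 2) ` Y \<subseteq> Y" using Y_back X_back[of 2] by auto
    show "(\<lambda>y. colour_nbr (colour_nbr y 2) 1) ` Y \<subseteq> Y"
      using X_back[of 1] colour_nbr_sides(1)[of 2] by auto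
  qed
  moreover have "\<forall>y\<in>Y. F_ends (colour_nbr y 1) = {y, colour_nbr (colour_nbr y 1) 2}"
    using Y_back F_ends by auto
  ultimately show ?thesis unfolding direction_def by blast
qed

definition spreadable :: "'a set \<Rightarrow> bool" where
  "spreadable C \<longleftrightarrow> (\<exists>d. cycle_direction Y (X \<inter> VH) F_ends d \<and> spread_on d C S)"

definition chosen_direction :: "'a set \<Rightarrow> ('a \<Rightarrow> 'a) \<times> ('a \<Rightarrow> 'a)" where
  "chosen_direction C =
     (SOME p. direction (fst p) (snd p) \<and> (spreadable C \<longrightarrow> spread_on (fst p) C S))"

lemma chosen_direction:
  "direction (fst (chosen_direction C)) (snd (chosen_direction C))
   \<and> (spreadable C \<longrightarrow> spread_on (fst (chosen_direction C)) C S)"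
proof -
  have "\<exists>p. direction (fst p) (snd p) \<and> (spreadable C \<longrightarrow> spread_on (fst p) C S)"
  proof (cases "spreadable C")
    case True
    then obtain d ed where "direction d ed" "spread_on d C S"
      unfolding spreadable_def cycle_direction_iff by blast
    then show ?thesis by (intro exI[of _ "(d, ed)"]) simp
  next
    case False
    then show ?thesis using default_direction
      by (intro exI[of _ "(\<lambda>y. colour_nbr (colour_nbr y 1) 2, \<lambda>y. colour_nbr y 1)"]) simp
  qed
  then show ?thesis unfolding chosen_direction_def by (rule someI_ex)
qed

text \<open>The directions chosen for the different components of F* are glued into one
  direction of F, which on each component agrees with the one chosen for it.\<close>
definition succ :: "'a \<Rightarrow> 'a" where
  "succ y = fst (chosen_direction (component y)) y"

definition edge :: "'a \<Rightarrow> 'a" where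
  "edge y = snd (chosen_direction (component y)) y"

definition spread :: "'a \<Rightarrow> bool" where
  "spread y \<longleftrightarrow> spreadable (component y)"

lemma chosen_direction_step:
  assumes "y \<in> Y"
  shows "fst (chosen_direction C) y \<in> Y \<and> snd (chosen_direction C) y \<in> X \<inter> VH
    \<and> F_ends (snd (chosen_direction C) y) = {y, fst (chosen_direction C) y}
    \<and> fst (chosen_direction C) y \<noteq> y
    \<and> component (fst (chosen_direction C) y) = component y"
  using direction_step[OF conjunct1[OF chosen_direction] assms] component_eq
  by (metis r_into_rtranclp)

lemma succ_step: "y \<in> Y \<Longrightarrow> succ y \<in> Y \<and> edge y \<in> X \<inter> VH \<and> F_ends (edge y) = {y, succ y}
    \<and> succ y \<noteq> y \<and> component (succ y) = component y"
  unfolding succ_def edge_def using chosen_direction_step by blast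

lemma bij_succ: "bij_betw succ Y Y"
  unfolding succ_def
  by (rule bij_betw_glue[where cls' = component])
    (use chosen_direction direction_def chosen_direction_step in auto)

lemma bij_edge: "bij_betw edge Y (X \<inter> VH)"
  unfolding edge_def
proof (rule bij_betw_glue[where cls' = "\<lambda>x. component (colour_nbr x 1)"])
  show "bij_betw (snd (chosen_direction C)) Y (X \<inter> VH)" for C
    using chosen_direction unfolding direction_def by blast
  fix C y assume "y \<in> Y"
  note step = chosen_direction_step[OF this, of C]
  then have "colour_nbr (snd (chosen_direction C) y) 1 \<in> {y, fst (chosen_direction C) y}"
    using F_ends by blast
  with step show "component (colour_nbr (snd (chosen_direction C) y) 1) = component y" by auto
qed

lemma funpow_succ: "y \<in> Y \<Longrightarrow> (succ ^^ i) y = (fst (chosen_direction (component y)) ^^ i) y"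
  unfolding succ_def by (rule funpow_glue) (use chosen_direction_step in auto)

lemma mixed_transversal: "mixed_transversal Y triples (X \<inter> VH) F_ends S"
  using mixed unfolding triples_def F_ends_def[abs_def] .

lemma zigzag_path_cover: "zigzag_path_cover (X - VH) (X \<inter> VH) Y S E succ edge spread"
proof
  fix y assume y: "y \<in> Y"
  note step = succ_step[OF y]
  show "E y (edge y) \<and> E (edge y) (succ y)"
    using step EH_E EH_sym unfolding F_ends_def by blast
  show "succ y \<noteq> y" using step by blast
  show "spread (succ y) = spread y" using step unfolding spread_def by simp
  show "\<exists>!x. x \<in> X - VH \<and> E x y" using unique_outside_H[OF y] .
next
  fix y assume y: "y \<in> Y" "spread y" "y \<notin> S"
  then have "spread_on (fst (chosen_direction (component y))) (component y) S"
    "y \<in> component y - S"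
    using chosen_direction unfolding spread_def by (auto simp: component_iff)
  then show "\<exists>i\<in>{1,2,3::nat}. (succ ^^ i) y \<in> S"
    unfolding spread_on_def funpow_succ[OF y(1)] by blast
next
  fix y assume y: "y \<in> Y" and "\<not> spread y" "y \<in> S"
  then have "independent_in (X \<inter> VH) F_ends (S \<inter> component y)"
    using mixed_transversal unfolding mixed_transversal_def spread_def spreadable_def component_def
    by (auto simp: Let_def)
  moreover have "mg_adj (X \<inter> VH) F_ends y (succ y)"
    using succ_step[OF y] unfolding mg_adj_def by metis
  moreover have "y \<in> component y" "succ y \<in> component y"
    using succ_step[OF y] by (auto simp: component_iff)
  ultimately show "succ y \<notin> S"
    using \<open>y \<in> S\<close> unfolding independent_in_def by blast
next
  fix x u w assume x: "x \<in> X - VH" and "E x u" "E x w"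
  then have "u = w \<or> Fstar u w"
    unfolding Fstar_def Fstar_adj_def triples_def by (auto simp: nbrs_def)
  then show "spread u = spread w"
    unfolding spread_def using component_eq[OF r_into_rtranclp[of Fstar]] by auto
next
  fix x assume x: "x \<in> X - VH"
  show "nbrs E x \<subseteq> Y" using x E_between XY_disjoint by (auto simp: nbrs_def)
  show "card (nbrs E x) = 3" using x degree_X by blast
  show "card (S \<inter> nbrs E x) = 1"
    using mixed_transversal x unfolding mixed_transversal_def transversal_def triples_def by blast
qed (use finite_Y XY_disjoint E_sym bij_succ bij_edge in auto)

theorem proper_path_factor: "\<exists>P. proper_path_factor X Y E P"
proof -
  have "X = (X - VH) \<union> (X \<inter> VH)" by blast
  then show ?thesis using zigzag_path_cover.proper_path_factor[OF zigzag_path_cover] by simp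
qed

end

theorem mainTheorem6:
  fixes X Y VH S :: "'a set" and E EH :: "'a \<Rightarrow> 'a \<Rightarrow> bool" and c :: "'a \<Rightarrow> 'a \<Rightarrow> nat"
  assumes "bigraph34 X Y E"
    and "full_3reg_subgraph X Y E VH EH"
    and "proper_3_edge_colouring EH c"
    and "mixed_transversal Y (nbrs E ` (X - VH)) (X \<inter> VH)
           (\<lambda>x. {y. EH x y \<and> c x y \<in> {1,2}}) S"
  shows "\<exists>P. proper_path_factor X Y E P"
  using mixed_transversal_setting.proper_path_factor[OF mixed_transversal_setting.intro[OF assms]] .

end
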